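(* If $(X,\mathcal{H})$ is a contraction flow, then $\mathcal{H}$ is a continuous absorptive action on $X$.
   Context: An $\mathbb{R}$-group is an abelian group $E$ (operation written multiplicatively) whose underlying set is a subset of $\mathbb{R}$ containing all positive integers, such that: (RG1) with the natural order of $\mathbb{R}$, $E$ is a totally ordered group; (RG2) with the topology induced from $\mathbb{R}$, $E$ is a locally compact group; (RG3) there is a nonconstant continuous homomorphism $h:E\to\mathbb{R}_+^*$ such that for every $\alpha\in E$ the set $\{\varepsilon\in E:\varepsilon\ge\alpha\}$ is integrable for $h\cdot m$, $m$ a Haar measure on $E$. $e$ is the identity of $E$, $\varepsilon^{-1}$ the group inverse; inequalities refer to the order of $\mathbb{R}$. An action of $E$ on $X$ is a family $(H_\varepsilon)_{\varepsilon\in E}$ of bijections of $X$ with $H_\varepsilon\circ H_{\varepsilon'}=H_{\varepsilon\varepsilon'}$, $H_e=\mathrm{id}_X$; continuous if $(\varepsilon,x)\mapsto H_\varepsilon(x)$ is continuous on $E\times X$; absorptive if some $\omega\in X$ satisfies: for every neighbourhood $V$ of $\omega$ and every $x\in X$ there are a neighbourhood $U$ of $x$ and $\alpha\in E$ with $H_{\varepsilon^{-1}}(U)\subset V$ for all $\varepsilon\le\alpha$. A contraction flow is a pair $(X,\mathcal{H})$ where $X$ is a complete locally compact metric space (metric $d$) not reduced to one point, and $\mathcal{H}=(H_\varepsilon)_{\varepsilon\in E}$ is an action of an $\mathbb{R}$-group $E$ on $X$ such that: (i) for each $x\in X$, $\varepsilon\mapsto H_\varepsilon(x)$ is continuous $E\to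 X$; (ii) for each $\varepsilon\in E$, $\sup_{x\neq y} d(H_\varepsilon(x),H_\varepsilon(y))/d(x,y)<+\infty$; (iii) $\lim_{\varepsilon\to+\infty}\sup_{x\neq y} d(H_\varepsilon(x),H_\varepsilon(y))/d(x,y)=0$. *)

theory Defs
  imports "HOL-Analysis.Analysis" "HOL-Algebra.Group"
begin

text \<open>An R-group: an abelian group whose carrier is a subset of the reals containing
 all positive integers; its group operation is abstract (written multiplicatively).\<close>

definition haar_measure :: "real monoid \<Rightarrow> real measure \<Rightarrow> bool" where
  "haar_measure E m \<longleftrightarrow>
     space m = carrier E \<and>
     sets m = sets (restrict_space borel (carrier E)) \<and>
     (\<forall>A \<in> sets m. \<forall>a \<in> carrier E. emeasure m ((\<lambda>b. a \<otimes>\<^bsub>E\<^esub> b) ` A) = emeasure m A) \<and>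
     (\<forall>K. K \<subseteq> carrier E \<longrightarrow> compact K \<longrightarrow> emeasure m K < \<infinity>) \<and>
     (\<forall>U. openin (top_of_set (carrier E)) U \<longrightarrow> U \<noteq> {} \<longrightarrow> emeasure m U > 0)"

definition R_group :: "real monoid \<Rightarrow> bool" where
  "R_group E \<longleftrightarrow>
     comm_group E \<and>
     (\<forall>n::nat. n \<ge> 1 \<longrightarrow> real n \<in> carrier E) \<and>
     \<comment> \<open>(RG1) totally ordered group for the natural order of the reals\<close>
     (\<forall>a\<in>carrier E. \<forall>b\<in>carrier E. \<forall>c\<in>carrier E. a \<le> b \<longrightarrow> a \<otimes>\<^bsub>E\<^esub> c \<le> b \<otimes>\<^bsub>E\<^esub> c) \<and>
     \<comment> \<open>(RG2) locally compact topological group for the induced topology\<close>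
     continuous_on (carrier E \<times> carrier E) (\<lambda>(a, b). a \<otimes>\<^bsub>E\<^esub> b) \<and>
     continuous_on (carrier E) (\<lambda>a. inv\<^bsub>E\<^esub> a) \<and>
     locally compact (carrier E) \<and>
     \<comment> \<open>(RG3)\<close>
     (\<exists>h :: real \<Rightarrow> real.
        (\<forall>a\<in>carrier E. h a > 0) \<and>
        (\<forall>a\<in>carrier E. \<forall>b\<in>carrier E. h (a \<otimes>\<^bsub>E\<^esub> b) = h a * h b) \<and>
        continuous_on (carrier E) h \<and>
        (\<exists>a\<in>carrier E. \<exists>b\<in>carrier E. h a \<noteq> h b) \<and>
        (\<exists>m. haar_measure E m \<and>
             (\<forall>\<alpha>\<in>carrier E. set_integrable m {\<epsilon>\<in>carrier E. \<epsilon> \<ge> \<alpha>} h)))"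

definition is_action :: "real monoid \<Rightarrow> (real \<Rightarrow> 'a \<Rightarrow> 'a) \<Rightarrow> bool" where
  "is_action E H \<longleftrightarrow>
     (\<forall>\<epsilon>\<in>carrier E. bij (H \<epsilon>)) \<and>
     (\<forall>\<epsilon>\<in>carrier E. \<forall>\<epsilon>'\<in>carrier E. H \<epsilon> \<circ> H \<epsilon>' = H (\<epsilon> \<otimes>\<^bsub>E\<^esub> \<epsilon>')) \<and>
     H \<one>\<^bsub>E\<^esub> = id"

definition continuous_action :: "real monoid \<Rightarrow> (real \<Rightarrow> 'a::topological_space \<Rightarrow> 'a) \<Rightarrow> bool" where
  "continuous_action E H \<longleftrightarrow> continuous_on (carrier E \<times> UNIV) (\<lambda>(\<epsilon>, x). H \<epsilon> x)"

definition absorptive_action :: "real monoid \<Rightarrow> (real \<Rightarrow> 'a::topological_space \<Rightarrow> 'a) \<Rightarrow> bool" where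
  "absorptive_action E H \<longleftrightarrow>
     (\<exists>\<omega>. \<forall>V. open V \<longrightarrow> \<omega> \<in> V \<longrightarrow>
        (\<forall>x. \<exists>U \<alpha>. open U \<and> x \<in> U \<and> \<alpha> \<in> carrier E \<and>
              (\<forall>\<epsilon>\<in>carrier E. \<epsilon> \<le> \<alpha> \<longrightarrow> H (inv\<^bsub>E\<^esub> \<epsilon>) ` U \<subseteq> V)))"

definition lip_const :: "('a::metric_space \<Rightarrow> 'a) \<Rightarrow> real" where
  "lip_const f = (SUP p \<in> {(x, y). x \<noteq> y}. dist (f (fst p)) (f (snd p)) / dist (fst p) (snd p))"

text \<open>The metric space X is the whole of the type 'a.\<close>
definition contraction_flow :: "real monoid \<Rightarrow> (real \<Rightarrow> 'a::metric_space \<Rightarrow> 'a) \<Rightarrow> bool" where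
  "contraction_flow E H \<longleftrightarrow>
     complete (UNIV :: 'a set) \<and> locally compact (UNIV :: 'a set) \<and>
     (\<exists>x y :: 'a. x \<noteq> y) \<and>
     R_group E \<and> is_action E H \<and>
     (\<forall>x. continuous_on (carrier E) (\<lambda>\<epsilon>. H \<epsilon> x)) \<and>
     (\<forall>\<epsilon>\<in>carrier E. bdd_above ((\<lambda>(x, y). dist (H \<epsilon> x) (H \<epsilon> y) / dist x y) ` {(x, y). x \<noteq> y})) \<and>
     ((\<lambda>\<epsilon>. lip_const (H \<epsilon>)) \<longlongrightarrow> 0) (inf at_top (principal (carrier E)))"

end

theory Submission
  imports Defs
begin

text \<open>
  Write L(t) for the Lipschitz constant of H t; by assumption L(t) \<rightarrow> 0 as
  t \<rightarrow> +\<infinity> in E, and E is cofinal in the reals because it contains all positive integers.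

  Absorption: some H b is a strict contraction of the complete space X, so by Banach's
  theorem it has a unique fixed point \<omega>; since E is abelian, every H s maps this fixed
  point to a fixed point of H b, hence \<omega> is fixed by the whole action.  For
  \<epsilon> \<le> \<beta>\<inverse> one has \<epsilon>\<inverse> \<ge> \<beta>, so H (\<epsilon>\<inverse>) shrinks distances to \<omega> by a factor L(\<epsilon>\<inverse>)
  that is uniformly small, which maps a unit ball around any x into a given ball around \<omega>.

  Continuity: each orbit map \<epsilon> \<mapsto> H \<epsilon> x is continuous, so joint continuity follows
  from a locally uniform Lipschitz bound in x (a general criterion proved first).  Such
  a bound holds for all \<epsilon> above some u < \<epsilon>0: factor H \<epsilon> = H (\<epsilon> s) \<circ> H (s\<inverse>) with s
  chosen so that \<epsilon> s is large, whence L(\<epsilon>) \<le> L(\<epsilon> s) L(s\<inverse>) \<le> L(s\<inverse>).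
\<close>

section \<open>Lipschitz constants\<close>

lemma lip_const_ratio_le:
  fixes f :: "'a::metric_space \<Rightarrow> 'a"
  assumes bdd: "bdd_above ((\<lambda>(x, y). dist (f x) (f y) / dist x y) ` {(x, y). x \<noteq> y})"
    and "x \<noteq> y"
  shows "dist (f x) (f y) / dist x y \<le> lip_const f"
proof -
  have "(\<lambda>(x, y). dist (f x) (f y) / dist x y)
          = (\<lambda>p. dist (f (fst p)) (f (snd p)) / dist (fst p) (snd p))"
    by (auto simp: split_beta')
  then show ?thesis
    unfolding lip_const_def using bdd assms(2)
    by (intro cSUP_upper[where f = "\<lambda>p. dist (f (fst p)) (f (snd p)) / dist (fst p) (snd p)"
          and x = "(x, y)", simplified]) auto
qed

lemma lip_const_bound:
  fixes f :: "'a::metric_space \<Rightarrow> 'a"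
  assumes "bdd_above ((\<lambda>(x, y). dist (f x) (f y) / dist x y) ` {(x, y). x \<noteq> y})"
  shows "dist (f x) (f y) \<le> lip_const f * dist x y"
proof (cases "x = y")
  case False
  then show ?thesis
    using lip_const_ratio_le[OF assms False] by (simp add: divide_le_eq mult.commute)
qed simp

lemma lip_const_nonneg:
  fixes f :: "'a::metric_space \<Rightarrow> 'a"
  assumes "bdd_above ((\<lambda>(x, y). dist (f x) (f y) / dist x y) ` {(x, y). x \<noteq> y})"
    and "\<exists>x y::'a. x \<noteq> y"
  shows "lip_const f \<ge> 0"
proof -
  obtain a b :: 'a where "a \<noteq> b" using assms(2) by blast
  have "0 \<le> dist (f a) (f b) / dist a b" by simp
  also have "\<dots> \<le> lip_const f" using lip_const_ratio_le[OF assms(1) \<open>a \<noteq> b\<close>] .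
  finally show ?thesis .
qed

section \<open>Totally ordered groups of reals\<close>

locale ordered_real_group = comm_group E for E :: "real monoid" (structure) +
  assumes le_mult_right:
    "\<lbrakk>a \<in> carrier E; b \<in> carrier E; c \<in> carrier E; a \<le> b\<rbrakk> \<Longrightarrow> a \<otimes> c \<le> b \<otimes> c"
begin

lemma less_mult_right:
  assumes "a \<in> carrier E" "b \<in> carrier E" "c \<in> carrier E" "a < b"
  shows "a \<otimes> c < b \<otimes> c"
proof -
  have "a \<otimes> c \<le> b \<otimes> c" using assms by (simp add: le_mult_right)
  moreover have "a \<otimes> c \<noteq> b \<otimes> c" using assms by auto
  ultimately show ?thesis by simp
qed

lemma inv_antimono:
  assumes "a \<in> carrier E" "b \<in> carrier E" "a \<le> b"
  shows "inv b \<le> inv a"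
proof -
  have "a \<otimes> (inv a \<otimes> inv b) \<le> b \<otimes> (inv a \<otimes> inv b)"
    using assms by (simp add: le_mult_right)
  moreover have "a \<otimes> (inv a \<otimes> inv b) = inv b"
    using assms by (simp add: m_assoc[symmetric])
  moreover have "b \<otimes> (inv a \<otimes> inv b) = inv a"
    using assms by (metis inv_closed m_lcomm r_inv r_one)
  ultimately show ?thesis by simp
qed

lemma le_inv_swap:
  assumes "a \<in> carrier E" "b \<in> carrier E" "a \<le> inv b"
  shows "b \<le> inv a"
  using inv_antimono[of a "inv b"] assms by simp

lemma mult_inv_less:
  assumes "a \<in> carrier E" "b \<in> carrier E" "\<one> < b"
  shows "a \<otimes> inv b < a"
proof -
  have "\<one> \<otimes> inv b < b \<otimes> inv b"
    using assms by (intro less_mult_right) auto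
  then have "inv b \<otimes> a < \<one> \<otimes> a"
    using assms by (intro less_mult_right) auto
  then show ?thesis using assms by (simp add: m_comm)
qed

end

lemma R_group_ordered: "R_group E \<Longrightarrow> ordered_real_group E"
  unfolding R_group_def ordered_real_group_def ordered_real_group_axioms_def by blast

lemma R_group_cofinal:
  assumes "R_group E"
  shows "\<exists>\<beta>\<in>carrier E. T \<le> \<beta>"
proof -
  have "real (nat \<lceil>T\<rceil> + 1) \<in> carrier E"
    using assms unfolding R_group_def by (metis le_add2)
  moreover have "T \<le> real (nat \<lceil>T\<rceil> + 1)" by linarith
  ultimately show ?thesis by blast
qed

section \<open>A criterion for joint continuity\<close>

lemma joint_continuity_from_uniform_lipschitz:
  fixes f :: "'e::metric_space \<Rightarrow> 'a::metric_space \<Rightarrow> 'b::metric_space"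
  assumes orbit: "\<And>x. continuous_on S (\<lambda>\<epsilon>. f \<epsilon> x)"
    and lip: "\<And>\<epsilon>\<^sub>0. \<epsilon>\<^sub>0 \<in> S \<Longrightarrow> \<exists>r>0. \<exists>K\<ge>0. \<forall>\<epsilon>\<in>S. dist \<epsilon> \<epsilon>\<^sub>0 < r \<longrightarrow>
               (\<forall>y z. dist (f \<epsilon> y) (f \<epsilon> z) \<le> K * dist y z)"
  shows "continuous_on (S \<times> UNIV) (\<lambda>(\<epsilon>, x). f \<epsilon> x)"
  unfolding continuous_on_iff
proof (intro ballI allI impI)
  fix p :: "'e \<times> 'a" and e :: real
  assume p: "p \<in> S \<times> UNIV" and e: "e > 0"
  obtain \<epsilon>\<^sub>0 x\<^sub>0 where p_eq: "p = (\<epsilon>\<^sub>0, x\<^sub>0)" and \<epsilon>\<^sub>0: "\<epsilon>\<^sub>0 \<in> S" using p by auto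
  obtain r K where r: "r > 0" and K: "K \<ge> 0"
    and lipK: "\<forall>\<epsilon>\<in>S. dist \<epsilon> \<epsilon>\<^sub>0 < r \<longrightarrow> (\<forall>y z. dist (f \<epsilon> y) (f \<epsilon> z) \<le> K * dist y z)"
    using lip[OF \<epsilon>\<^sub>0] by blast
  obtain d\<^sub>1 where d\<^sub>1: "d\<^sub>1 > 0"
    and near: "\<forall>\<epsilon>\<in>S. dist \<epsilon> \<epsilon>\<^sub>0 < d\<^sub>1 \<longrightarrow> dist (f \<epsilon> x\<^sub>0) (f \<epsilon>\<^sub>0 x\<^sub>0) < e/2"
    using orbit[of x\<^sub>0] \<epsilon>\<^sub>0 e unfolding continuous_on_iff by (meson half_gt_zero)
  define d where "d = min d\<^sub>1 (min r (e / (2 * (K + 1))))"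
  have "d > 0" unfolding d_def using d\<^sub>1 r K e by auto
  moreover have "dist (f \<epsilon> x) (f \<epsilon>\<^sub>0 x\<^sub>0) < e"
    if "\<epsilon> \<in> S" "dist \<epsilon> \<epsilon>\<^sub>0 < d" "dist x x\<^sub>0 < d" for \<epsilon> x
  proof -
    have "dist (f \<epsilon> x) (f \<epsilon>\<^sub>0 x\<^sub>0) \<le> dist (f \<epsilon> x) (f \<epsilon> x\<^sub>0) + dist (f \<epsilon> x\<^sub>0) (f \<epsilon>\<^sub>0 x\<^sub>0)"
      by (rule dist_triangle)
    also have "dist (f \<epsilon> x) (f \<epsilon> x\<^sub>0) \<le> K * dist x x\<^sub>0"
      using lipK that unfolding d_def by auto
    also have "K * dist x x\<^sub>0 \<le> K * (e / (2 * (K + 1)))"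
      using that K unfolding d_def by (intro mult_left_mono) auto
    also have "K * (e / (2 * (K + 1))) \<le> e/2"
      using K e by (simp add: field_simps)
    also have "dist (f \<epsilon> x\<^sub>0) (f \<epsilon>\<^sub>0 x\<^sub>0) < e/2"
      using near that unfolding d_def by auto
    finally show ?thesis by simp
  qed
  moreover have "dist \<epsilon> \<epsilon>\<^sub>0 < d" "dist x x\<^sub>0 < d" if "dist (\<epsilon>, x) p < d" for \<epsilon> x
    using that p_eq dist_fst_le[of "(\<epsilon>, x)" p] dist_snd_le[of "(\<epsilon>, x)" p] by auto
  ultimately show "\<exists>d>0. \<forall>q\<in>S \<times> UNIV. dist q p < d \<longrightarrow>
      dist ((\<lambda>(\<epsilon>, x). f \<epsilon> x) q) ((\<lambda>(\<epsilon>, x). f \<epsilon> x) p) < e"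
    using p_eq by force
qed

section \<open>Contraction flows\<close>

locale contraction_flow_context =
  fixes E :: "real monoid" (structure) and H :: "real \<Rightarrow> 'a::metric_space \<Rightarrow> 'a"
  assumes flow: "contraction_flow E H"
begin

lemma R_group: "R_group E"
  using flow unfolding contraction_flow_def by blast

sublocale ordered_real_group E
  using R_group by (rule R_group_ordered)

lemma cofinal: "\<exists>\<beta>\<in>carrier E. T \<le> \<beta>"
  using R_group by (rule R_group_cofinal)

lemma action_comp: "\<lbrakk>a \<in> carrier E; b \<in> carrier E\<rbrakk> \<Longrightarrow> H a (H b x) = H (a \<otimes> b) x"
  using flow unfolding contraction_flow_def is_action_def by (metis comp_apply)

lemma lipschitz: "t \<in> carrier E \<Longrightarrow> dist (H t y) (H t z) \<le> lip_const (H t) * dist y z"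
  using flow lip_const_bound unfolding contraction_flow_def by blast

lemma lip_nonneg: "t \<in> carrier E \<Longrightarrow> lip_const (H t) \<ge> 0"
  using flow lip_const_nonneg unfolding contraction_flow_def by blast

lemma lip_eventually_less:
  assumes "c > 0"
  shows "\<exists>T. \<forall>t\<in>carrier E. T \<le> t \<longrightarrow> lip_const (H t) < c"
proof -
  have "((\<lambda>t. lip_const (H t)) \<longlongrightarrow> 0) (inf at_top (principal (carrier E)))"
    using flow unfolding contraction_flow_def by blast
  from order_tendstoD(2)[OF this assms]
  have "eventually (\<lambda>t. t \<in> carrier E \<longrightarrow> lip_const (H t) < c) at_top"
    by (simp add: eventually_inf_principal)
  then show ?thesis unfolding eventually_at_top_linorder by blast
qed

lemma lip_eventually_less_element:
  assumes "c > 0"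
  obtains \<beta> where "\<beta> \<in> carrier E" "\<And>t. \<lbrakk>t \<in> carrier E; \<beta> \<le> t\<rbrakk> \<Longrightarrow> lip_const (H t) < c"
  using lip_eventually_less[OF assms] cofinal by (meson order_trans)

text \<open>Some H b is a contraction; its unique fixed point is fixed by the whole action,
  because all H s commute with H b.\<close>
lemma common_fixed_point: "\<exists>\<omega>. \<forall>s\<in>carrier E. H s \<omega> = \<omega>"
proof -
  obtain b where b: "b \<in> carrier E" and Lb: "lip_const (H b) < 1/2"
    using lip_eventually_less_element[of "1/2"] by auto
  have "\<exists>!\<omega>\<in>UNIV. H b \<omega> = \<omega>"
  proof (rule Banach_fix[of UNIV "1/2"])
    fix x y :: 'a
    have "dist (H b x) (H b y) \<le> lip_const (H b) * dist x y" using lipschitz b .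
    also have "\<dots> \<le> 1/2 * dist x y" using Lb by (intro mult_right_mono) auto
    finally show "dist (H b x) (H b y) \<le> 1/2 * dist x y" .
  qed (use flow in \<open>auto simp: contraction_flow_def\<close>)
  then obtain \<omega> where fix_b: "H b \<omega> = \<omega>" and unique: "\<And>y. H b y = y \<Longrightarrow> y = \<omega>" by auto
  have "H s \<omega> = \<omega>" if s: "s \<in> carrier E" for s
  proof -
    have "H b (H s \<omega>) = H (s \<otimes> b) \<omega>" using action_comp b s by (simp add: m_comm)
    also have "\<dots> = H s \<omega>" using action_comp[symmetric] b s fix_b by simp
    finally show ?thesis using unique by blast
  qed
  then show ?thesis by blast
qed

text \<open>The common fixed point absorbs: for \<epsilon> \<le> \<beta>\<inverse> the map H (\<epsilon>\<inverse>) has constant below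
  r/R, so it sends the unit ball around x, whose points lie within R of \<omega>, into ball \<omega> r.\<close>
lemma absorptive: "absorptive_action E H"
proof -
  obtain \<omega> where fixed: "\<forall>s\<in>carrier E. H s \<omega> = \<omega>" using common_fixed_point ..
  have "\<exists>U \<alpha>. open U \<and> x \<in> U \<and> \<alpha> \<in> carrier E \<and>
          (\<forall>\<epsilon>\<in>carrier E. \<epsilon> \<le> \<alpha> \<longrightarrow> H (inv \<epsilon>) ` U \<subseteq> V)"
    if V: "open V" "\<omega> \<in> V" for V x
  proof -
    obtain r where r: "r > 0" "ball \<omega> r \<subseteq> V" using V by (rule openE)
    define R where "R = dist x \<omega> + 1"
    have R: "R > 0" unfolding R_def by (simp add: add_nonneg_pos)
    obtain \<beta> where \<beta>: "\<beta> \<in> carrier E"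
      and small: "\<And>t. \<lbrakk>t \<in> carrier E; \<beta> \<le> t\<rbrakk> \<Longrightarrow> lip_const (H t) < r / R"
      using lip_eventually_less_element[of "r / R"] r R by auto
    have "H (inv \<epsilon>) ` ball x 1 \<subseteq> ball \<omega> r" if \<epsilon>: "\<epsilon> \<in> carrier E" "\<epsilon> \<le> inv \<beta>" for \<epsilon>
    proof
      fix z assume "z \<in> H (inv \<epsilon>) ` ball x 1"
      then obtain y where y: "dist x y < 1" "z = H (inv \<epsilon>) y" by auto
      have t: "inv \<epsilon> \<in> carrier E" using \<epsilon> by simp
      have "\<beta> \<le> inv \<epsilon>" using le_inv_swap \<epsilon> \<beta> by blast
      then have Lt: "lip_const (H (inv \<epsilon>)) < r / R" using small t by blast
      have "dist y \<omega> \<le> R" unfolding R_def using y(1) dist_triangle[of y \<omega> x]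
        by (simp add: dist_commute)
      have "dist z \<omega> = dist (H (inv \<epsilon>) y) (H (inv \<epsilon>) \<omega>)" using y fixed t by simp
      also have "\<dots> \<le> lip_const (H (inv \<epsilon>)) * dist y \<omega>" using lipschitz t by blast
      also have "\<dots> \<le> lip_const (H (inv \<epsilon>)) * R"
        using \<open>dist y \<omega> \<le> R\<close> lip_nonneg t by (intro mult_left_mono) auto
      also have "\<dots> < r" using Lt R by (simp add: less_divide_eq)
      finally show "z \<in> ball \<omega> r" by (simp add: dist_commute)
    qed
    then have "\<forall>\<epsilon>\<in>carrier E. \<epsilon> \<le> inv \<beta> \<longrightarrow> H (inv \<epsilon>) ` ball x 1 \<subseteq> V"
      using r(2) by (meson subset_trans)
    then show ?thesis using \<beta> by (intro exI[of _ "ball x 1"] exI[of _ "inv \<beta>"]) simp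
  qed
  then show ?thesis unfolding absorptive_action_def by blast
qed

text \<open>For each u in E the maps H \<epsilon> with \<epsilon> > u are uniformly Lipschitz: choose s with
  u s beyond the threshold where the constants drop below 1; then every \<epsilon> s is beyond it
  too, and H \<epsilon> = H (\<epsilon> s) \<circ> H (s\<inverse>) has constant at most L(s\<inverse>).\<close>
lemma uniformly_lipschitz_above:
  assumes "u \<in> carrier E"
  shows "\<exists>K\<ge>0. \<forall>\<epsilon>\<in>carrier E. u < \<epsilon> \<longrightarrow> (\<forall>y z. dist (H \<epsilon> y) (H \<epsilon> z) \<le> K * dist y z)"
proof -
  obtain \<gamma> where \<gamma>: "\<gamma> \<in> carrier E"
    and small: "\<And>t. \<lbrakk>t \<in> carrier E; \<gamma> \<le> t\<rbrakk> \<Longrightarrow> lip_const (H t) < 1"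
    using lip_eventually_less_element[of 1] by auto
  define s where "s = inv u \<otimes> \<gamma>"
  have s: "s \<in> carrier E" "inv s \<in> carrier E" unfolding s_def using assms \<gamma> by auto
  have "dist (H \<epsilon> y) (H \<epsilon> z) \<le> lip_const (H (inv s)) * dist y z"
    if \<epsilon>: "\<epsilon> \<in> carrier E" "u < \<epsilon>" for \<epsilon> y z
  proof -
    have es: "\<epsilon> \<otimes> s \<in> carrier E" using \<epsilon> s by simp
    have "u \<otimes> s \<le> \<epsilon> \<otimes> s" using \<epsilon> assms s by (intro le_mult_right) auto
    moreover have "u \<otimes> s = \<gamma>" unfolding s_def using assms \<gamma> by (simp add: m_assoc[symmetric])
    ultimately have L1: "lip_const (H (\<epsilon> \<otimes> s)) < 1" using small es by simp
    have factor: "H \<epsilon> w = H (\<epsilon> \<otimes> s) (H (inv s) w)" for w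
      using action_comp[OF es s(2)] \<epsilon> s by (simp add: m_assoc)
    have "dist (H \<epsilon> y) (H \<epsilon> z)
            \<le> lip_const (H (\<epsilon> \<otimes> s)) * dist (H (inv s) y) (H (inv s) z)"
      unfolding factor using lipschitz es by blast
    also have "\<dots> \<le> 1 * dist (H (inv s) y) (H (inv s) z)"
      using L1 by (intro mult_right_mono) auto
    also have "\<dots> \<le> lip_const (H (inv s)) * dist y z" using lipschitz s by simp
    finally show ?thesis .
  qed
  then show ?thesis using lip_nonneg s by blast
qed

text \<open>Joint continuity: below each \<epsilon>0 there is u < \<epsilon>0 in E, and the uniform bound on
  (u, \<infinity>) feeds the general criterion.\<close>
lemma continuous: "continuous_action E H"
  unfolding continuous_action_def
proof (rule joint_continuity_from_uniform_lipschitz)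
  show "continuous_on (carrier E) (\<lambda>\<epsilon>. H \<epsilon> x)" for x
    using flow unfolding contraction_flow_def by blast
next
  fix \<epsilon>\<^sub>0 assume \<epsilon>\<^sub>0: "\<epsilon>\<^sub>0 \<in> carrier E"
  obtain \<beta> where \<beta>: "\<beta> \<in> carrier E" "\<one> + 1 \<le> \<beta>" using cofinal by blast
  define u where "u = \<epsilon>\<^sub>0 \<otimes> inv \<beta>"
  have u: "u \<in> carrier E" "u < \<epsilon>\<^sub>0" unfolding u_def using \<epsilon>\<^sub>0 \<beta> mult_inv_less by auto
  obtain K where "K \<ge> 0"
    and "\<forall>\<epsilon>\<in>carrier E. u < \<epsilon> \<longrightarrow> (\<forall>y z. dist (H \<epsilon> y) (H \<epsilon> z) \<le> K * dist y z)"
    using uniformly_lipschitz_above[OF u(1)] by blast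
  then show "\<exists>r>0. \<exists>K\<ge>0. \<forall>\<epsilon>\<in>carrier E. dist \<epsilon> \<epsilon>\<^sub>0 < r \<longrightarrow>
               (\<forall>y z. dist (H \<epsilon> y) (H \<epsilon> z) \<le> K * dist y z)"
    using u(2) by (intro exI[of _ "\<epsilon>\<^sub>0 - u"]) (auto simp: dist_real_def)
qed

end

theorem proposition2p5:
  fixes E :: "real monoid" and H :: "real \<Rightarrow> 'a::metric_space \<Rightarrow> 'a"
  assumes "contraction_flow E H"
  shows "continuous_action E H \<and> absorptive_action E H"
proof -
  interpret contraction_flow_context E H using assms by unfold_locales
  show ?thesis using continuous absorptive by blast
qed

end
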